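(* Let $p$ be a prime, $q=p^l$, $m\ge1$, $n=2m$, $N=q^n-1$. Let $r=\rho(q-1)+1$ with $0\leqslant\rho\leqslant n-1$, and let $I\subseteq M_r$ satisfy $\{q,\,q-2,\,|q-4|\}\cap I=\emptyset$ if $\rho$ is odd and $\{1,3\}\cap I=\emptyset$ if $\rho$ is even. Let $\delta=q^{n-\rho}-1$ and $\mathcal{I}_{n-\rho}=\{q^{n-\rho}-q^j\mid 0\le j\le n-\rho-1\}$. Let $x=(x_g)_{g\in\mathbb{F}_{q^n}^*}$ be a codeword of $\mathcal{C}_q(r,I,n)^*$ of Hamming weight $\delta$, let $\Lambda_s=\sum_{g\in\mathbb{F}_{q^n}^*}x_g g^{s}$ for integers $s\ge0$, and let $\sigma(X)=\prod_{g:\,x_g\neq0}(1-gX)=1+\sum_{j=1}^{\delta}\sigma_jX^j$ be the locator polynomial of $x$. Then: (i) $\Lambda_1=\Lambda_2=\cdots=\Lambda_{\delta-1}=0$; (ii) for $u\in[1,\delta-1]$: if $u\notin\mathcal{I}_{n-\rho}$ then $\Lambda_{\delta+u}=0$ and $\sigma_u=0$; if $u\in\mathcal{I}_{n-\rho}$ then $\sigma_u=-\Lambda_{\delta+u}/\Lambda_\delta$ (in particular $\Lambda_\delta\ne0$); (iii) $\sigma(X)=1-\sum_{u\in\mathcal{I}_{n-\rho}}\frac{\Lambda_{\delta+u}}{\Lambda_\delta}X^u$.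
   Context: Let $\alpha$ be a primitive element of $\mathbb{F}_{q^n}$. Every integer $0\le u\le q^n-1$ is written $u=\sum_{i=0}^{n-1}u_iq^i$, $u_i\in\{0,\dots,q-1\}$; $\mathrm{wt}_q(u)=\sum u_i$, $O(u)=\sum_{i\text{ odd}}u_i$, $E(u)=\sum_{i\text{ even}}u_i$. For $-1\le r<n(q-1)$, $Z_r=\{\alpha^u\mid 0<u\le q^n-1,\ \mathrm{wt}_q(u)\le n(q-1)-r-1\}$. For $0\le r\le n(q-1)$ and integer $k\ge0$, $\Theta^{(r)}_k=\{\alpha^u\mid 0\le u\le q^n-1,\ \mathrm{wt}_q(u)=n(q-1)-r,\ |O(u)-E(u)|=k\}$. $M_r$ is the set of even (resp. odd) integers $k\in[0,m(q-1)]$ when $r$ is even (resp. odd). For $I\subseteq M_r$: $\overline I=M_r\setminus I$, $Z_{r,I}=Z_r\cup\bigcup_{k\in\overline I}\Theta^{(r)}_k$. $\mathcal{C}_q(r,I,n)^*$ is the cyclic code of length $N$ over $\mathbb{F}_q$ with coordinates indexed by $\mathbb{F}_{q^n}^*$ (coordinate $i$ labelled $\alpha^i$) consisting of all $x=(x_g)$ with $\sum_g x_g g^{u}=0$ for every $u\in[1,N]$ with $\alpha^u\in Z_{r,I}$. *)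

theory Defs
  imports "HOL-Computational_Algebra.Polynomial"
begin

definition qdigit :: "nat \<Rightarrow> nat \<Rightarrow> nat \<Rightarrow> nat" where
  "qdigit q i u = (u div q ^ i) mod q"

definition wt_q :: "nat \<Rightarrow> nat \<Rightarrow> nat \<Rightarrow> nat" where
  "wt_q q n u = (\<Sum>i<n. qdigit q i u)"

definition O_q :: "nat \<Rightarrow> nat \<Rightarrow> nat \<Rightarrow> nat" where
  "O_q q n u = (\<Sum>i\<in>{i. i < n \<and> odd i}. qdigit q i u)"

definition E_q :: "nat \<Rightarrow> nat \<Rightarrow> nat \<Rightarrow> nat" where
  "E_q q n u = (\<Sum>i\<in>{i. i < n \<and> even i}. qdigit q i u)"

definition primitive_elem :: "'a::{finite,field} \<Rightarrow> bool" where
  "primitive_elem \<alpha> \<longleftrightarrow> \<alpha> \<noteq> 0 \<and>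
     (\<forall>k. 0 < k \<and> k < card (UNIV :: 'a set) - 1 \<longrightarrow> \<alpha> ^ k \<noteq> 1)"

definition Z_set :: "'a::field \<Rightarrow> nat \<Rightarrow> nat \<Rightarrow> nat \<Rightarrow> 'a set" where
  "Z_set \<alpha> q n r = {\<alpha> ^ u | u. 0 < u \<and> u \<le> q ^ n - 1 \<and>
      int (wt_q q n u) \<le> int n * (int q - 1) - int r - 1}"

definition Theta_set :: "'a::field \<Rightarrow> nat \<Rightarrow> nat \<Rightarrow> nat \<Rightarrow> nat \<Rightarrow> 'a set" where
  "Theta_set \<alpha> q n r k = {\<alpha> ^ u | u. u \<le> q ^ n - 1 \<and>
      int (wt_q q n u) = int n * (int q - 1) - int r \<and>
      \<bar>int (O_q q n u) - int (E_q q n u)\<bar> = int k}"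

definition M_set :: "nat \<Rightarrow> nat \<Rightarrow> nat \<Rightarrow> nat set" where
  "M_set q m r = {k. k \<le> m * (q - 1) \<and> (even k \<longleftrightarrow> even r)}"

definition Z_rI :: "'a::field \<Rightarrow> nat \<Rightarrow> nat \<Rightarrow> nat \<Rightarrow> nat \<Rightarrow> nat set \<Rightarrow> 'a set" where
  "Z_rI \<alpha> q n m r I = Z_set \<alpha> q n r \<union> (\<Union>k\<in>M_set q m r - I. Theta_set \<alpha> q n r k)"

text \<open>Codewords of C_q(r,I,n)^*: words x indexed by nonzero field elements
  (x 0 = 0 by convention), entries in the subfield F_q = {y. y^q = y}.\<close>

definition in_code :: "'a::{finite,field} \<Rightarrow> nat \<Rightarrow> nat \<Rightarrow> nat \<Rightarrow> nat \<Rightarrow> nat set \<Rightarrow> ('a \<Rightarrow> 'a) \<Rightarrow> bool" where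
  "in_code \<alpha> q n m r I x \<longleftrightarrow>
     x 0 = 0 \<and> (\<forall>g. x g ^ q = x g) \<and>
     (\<forall>u\<in>{1..q ^ n - 1}. \<alpha> ^ u \<in> Z_rI \<alpha> q n m r I \<longrightarrow>
        (\<Sum>g\<in>UNIV - {0}. x g * g ^ u) = 0)"

definition hamming_wt :: "('a::{finite,zero} \<Rightarrow> 'a) \<Rightarrow> nat" where
  "hamming_wt x = card {g. g \<noteq> 0 \<and> x g \<noteq> 0}"

definition Lambda :: "('a::{finite,field} \<Rightarrow> 'a) \<Rightarrow> nat \<Rightarrow> 'a" where
  "Lambda x s = (\<Sum>g\<in>UNIV - {0}. x g * g ^ s)"

definition locator :: "('a::{finite,field} \<Rightarrow> 'a) \<Rightarrow> 'a poly" where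
  "locator x = (\<Prod>g\<in>{g. g \<noteq> 0 \<and> x g \<noteq> 0}. [:1, - g:])"

definition I_set :: "nat \<Rightarrow> nat \<Rightarrow> nat set" where
  "I_set q t = {q ^ t - q ^ j | j. j < t}"

end

theory Submission
  imports Defs
begin

(* Write an exponent below q^t as the digit-wise complement s = q^t - 1 - c of some c < q^t.
   Then wt(s) = t(q - 1) - wt(c), and O(s) - E(s) is determined by the parity of t and the
   alternating digit sum of c. For 1 <= s < delta we have c <> 0, and for s = delta + u with
   u not in I_{n-rho} the exponent is q^t + (q^t - 1 - c) with c = q^t - u not a power of q,
   so wt(c) >= 2. In both cases wt(s) <= n(q - 1) - r, with equality only if |O(s) - E(s)| is
   one of the excluded values 1, 3 resp. q, q - 2, |q - 4|; hence alpha^s lies in Z_{r,I} and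
   the syndrome Lambda_s vanishes (for rho = 0, delta = q^n - 1 is a period of Lambda instead).
   As the codeword has weight delta, the locator satisfies Newton's identities
   sum_j sigma_j Lambda_(T-j) = 0 for T >= delta. These give Lambda_delta <> 0, and, since two
   elements of I_{n-rho} always add up to more than delta, the identity at T = delta + u
   collapses to sigma_u Lambda_delta + Lambda_(delta+u) = 0. *)

section \<open>q-adic digits\<close>

lemma qdigit_0 [simp]: "qdigit q 0 c = c mod q"
  by (simp add: qdigit_def)

lemma qdigit_Suc: "qdigit q (Suc i) c = qdigit q i (c div q)"
  by (simp add: qdigit_def div_mult2_eq)

lemma qdigit_less: "0 < q \<Longrightarrow> qdigit q i c < q"
  by (simp add: qdigit_def)

lemma qdigit_sum_power:
  assumes "0 < q" "\<forall>i<t. e i < q"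
  shows "qdigit q i (\<Sum>k<t. e k * q ^ k) = (if i < t then e i else 0)"
  using assms(2)
proof (induction t arbitrary: e i)
  case 0
  then show ?case by (simp add: qdigit_def)
next
  case (Suc t)
  have expand: "(\<Sum>k<Suc t. e k * q ^ k) = e 0 + q * (\<Sum>k<t. e (Suc k) * q ^ k)"
    by (subst sum.lessThan_Suc_shift) (simp add: sum_distrib_left mult_ac)
  have "e 0 < q" using Suc.prems by simp
  then have "(e 0 + q * (\<Sum>k<t. e (Suc k) * q ^ k)) div q = (\<Sum>k<t. e (Suc k) * q ^ k)"
    and "(e 0 + q * (\<Sum>k<t. e (Suc k) * q ^ k)) mod q = e 0"
    using assms(1) by simp_all
  then show ?case
    unfolding expand by (cases i) (simp_all add: qdigit_Suc Suc.IH Suc.prems)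
qed

lemma sum_qdigit_power:
  assumes "0 < q" "c < q ^ t"
  shows "(\<Sum>i<t. qdigit q i c * q ^ i) = c"
  using assms(2)
proof (induction t arbitrary: c)
  case (Suc t)
  have "c div q < q ^ t"
    using Suc.prems assms(1) by (simp add: div_less_iff_less_mult mult.commute)
  then have "(\<Sum>i<t. qdigit q i (c div q) * q ^ i) = c div q"
    by (rule Suc.IH)
  moreover have "(\<Sum>i<Suc t. qdigit q i c * q ^ i)
      = c mod q + q * (\<Sum>i<t. qdigit q i (c div q) * q ^ i)"
    by (subst sum.lessThan_Suc_shift) (simp add: sum_distrib_left mult_ac qdigit_Suc)
  ultimately show ?case by simp
qed simp

lemma sum_pred_mult_power: "0 < q \<Longrightarrow> (\<Sum>i<t. (q - 1) * q ^ i) = (q::nat) ^ t - 1"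
proof (induction t)
  case (Suc t)
  have "0 < q ^ t" using Suc.prems by simp
  with Suc show ?case by (simp add: algebra_simps)
qed simp

lemma complement_qdigits:
  assumes "0 < q" "c < q ^ t"
  shows "q ^ t - 1 - c = (\<Sum>i<t. (q - 1 - qdigit q i c) * q ^ i)"
proof -
  have "(q - 1 - qdigit q i c) + qdigit q i c = q - 1" for i
    using qdigit_less[OF assms(1), of i c] by linarith
  then have "(\<Sum>i<t. (q - 1 - qdigit q i c) * q ^ i) + (\<Sum>i<t. qdigit q i c * q ^ i)
      = (\<Sum>i<t. (q - 1) * q ^ i)"
    by (simp only: sum.distrib[symmetric] add_mult_distrib[symmetric])
  then show ?thesis
    using sum_pred_mult_power[OF assms(1), of t] sum_qdigit_power[OF assms] by linarith
qed

lemma sum_qdigits_eq_0_iff: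
  assumes "0 < q" "c < q ^ t"
  shows "(\<Sum>i<t. qdigit q i c) = 0 \<longleftrightarrow> c = 0"
  using sum_qdigit_power[OF assms] by (auto simp: qdigit_def)

lemma sum_qdigits_eq_1:
  assumes "0 < q" "c < q ^ t" "(\<Sum>i<t. qdigit q i c) = 1"
  obtains j where "j < t" "c = q ^ j"
proof -
  obtain j where j: "j < t" "qdigit q j c \<noteq> 0"
    using assms(3) by (metis lessThan_iff sum.neutral zero_neq_one)
  have split: "(\<Sum>i<t. f i) = f j + (\<Sum>i\<in>{..<t}-{j}. f i)" for f :: "nat \<Rightarrow> nat"
    using j by (subst sum.remove[of _ j]) auto
  have "qdigit q j c = 1" "(\<Sum>i\<in>{..<t}-{j}. qdigit q i c) = 0"
    using assms(3) j split[of "\<lambda>i. qdigit q i c"] by linarith+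
  then have "qdigit q j c = 1" "\<forall>i\<in>{..<t}-{j}. qdigit q i c = 0"
    by simp_all
  then have "c = q ^ j"
    using sum_qdigit_power[OF assms(1,2)] split[of "\<lambda>i. qdigit q i c * q ^ i"] by simp
  with j(1) show thesis by (rule that)
qed

definition alt_digit_sum :: "nat \<Rightarrow> nat \<Rightarrow> nat \<Rightarrow> int" where
  "alt_digit_sum q n u = (\<Sum>i<n. (-1) ^ Suc i * int (qdigit q i u))"

lemma sum_alternating_sign: "(\<Sum>i<t. (-1) ^ Suc i :: int) = (if even t then 0 else -1)"
  by (induction t) auto

lemma abs_alternating_sum_le: "\<bar>\<Sum>i<t. (-1) ^ Suc i * int (d i)\<bar> \<le> int (\<Sum>i<t. d i)"
proof -
  have "\<bar>\<Sum>i<t. (-1) ^ Suc i * int (d i)\<bar> \<le> (\<Sum>i<t. \<bar>(-1) ^ Suc i * int (d i)\<bar>)"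
    by (rule sum_abs)
  then show ?thesis by (simp add: abs_mult)
qed

lemma even_alternating_sum_iff: "even (\<Sum>i<t. (-1) ^ Suc i * int (d i)) \<longleftrightarrow> even (\<Sum>i<t. d i)"
proof -
  have "(\<Sum>i<t. (-1) ^ Suc i * int (d i)) = int (\<Sum>i<t. d i) + (\<Sum>i<t. ((-1) ^ Suc i - 1) * int (d i))"
    by (simp add: of_nat_sum algebra_simps sum_subtractf)
  moreover have "even (\<Sum>i<t. ((-1) ^ Suc i - 1) * int (d i))"
    by (rule dvd_sum) (auto simp: minus_one_power_iff)
  ultimately show ?thesis by (simp del: of_nat_sum)
qed

lemma O_q_minus_E_q: "int (O_q q n u) - int (E_q q n u) = alt_digit_sum q n u"
proof -
  have "O_q q n u = (\<Sum>i<n. if odd i then qdigit q i u else 0)"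
    "E_q q n u = (\<Sum>i<n. if even i then qdigit q i u else 0)"
    unfolding O_q_def E_q_def by (simp_all add: sum.If_cases Collect_conj_eq lessThan_def Int_commute)
  then have "int (O_q q n u) - int (E_q q n u)
      = (\<Sum>i<n. int (if odd i then qdigit q i u else 0) - int (if even i then qdigit q i u else 0))"
    by (simp only: of_nat_sum sum_subtractf)
  also have "\<dots> = alt_digit_sum q n u"
    unfolding alt_digit_sum_def by (rule sum.cong) auto
  finally show ?thesis .
qed

lemma card_odd_lessThan_double: "card {i. i < 2 * m \<and> odd i} = m"
proof -
  have "{i. i < 2 * m \<and> odd i} = (\<lambda>k. 2 * k + 1) ` {..<m}"
    by (auto simp: image_def elim!: oddE)
  then show ?thesis by (simp add: card_image inj_on_def)
qed

lemma card_even_lessThan_double: "card {i. i < 2 * m \<and> even i} = m"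
proof -
  have "{i. i < 2 * m \<and> even i} = (\<lambda>k. 2 * k) ` {..<m}"
    by (auto simp: image_def elim!: evenE)
  then show ?thesis by (simp add: card_image inj_on_def)
qed

lemma abs_alt_digit_sum_le:
  assumes "0 < q"
  shows "\<bar>alt_digit_sum q (2 * m) u\<bar> \<le> int (m * (q - 1))"
proof -
  have digit_le: "qdigit q i u \<le> q - 1" for i
    using qdigit_less[OF assms, of i u] by linarith
  have "O_q q (2 * m) u \<le> of_nat (card {i. i < 2 * m \<and> odd i}) * (q - 1)"
    "E_q q (2 * m) u \<le> of_nat (card {i. i < 2 * m \<and> even i}) * (q - 1)"
    unfolding O_q_def E_q_def by (rule sum_bounded_above, rule digit_le)+
  then have "O_q q (2 * m) u \<le> m * (q - 1)" "E_q q (2 * m) u \<le> m * (q - 1)"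
    by (simp_all add: card_odd_lessThan_double card_even_lessThan_double)
  then show ?thesis
    unfolding O_q_minus_E_q[symmetric] by linarith
qed

lemma
  assumes "0 < q" "\<forall>i<t. e i < q" "t \<le> n"
  shows wt_q_sum_power: "wt_q q n (\<Sum>k<t. e k * q ^ k) = (\<Sum>k<t. e k)"
    and alt_digit_sum_sum_power:
      "alt_digit_sum q n (\<Sum>k<t. e k * q ^ k) = (\<Sum>k<t. (-1) ^ Suc k * int (e k))"
proof -
  have sub: "{..<t} \<subseteq> {..<n}" using assms(3) by auto
  show "wt_q q n (\<Sum>k<t. e k * q ^ k) = (\<Sum>k<t. e k)"
    unfolding wt_q_def qdigit_sum_power[OF assms(1,2)]
    by (subst sum.mono_neutral_right[OF _ sub]) auto
  show "alt_digit_sum q n (\<Sum>k<t. e k * q ^ k) = (\<Sum>k<t. (-1) ^ Suc k * int (e k))"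
    unfolding alt_digit_sum_def qdigit_sum_power[OF assms(1,2)]
    by (subst sum.mono_neutral_right[OF _ sub]) auto
qed

section \<open>Weights of complemented exponents\<close>

(* The flag b adds a leading digit 1 at position t: b = 0 gives the exponents below delta,
   b = 1 the exponents delta + u, with c = q^t - u. *)
lemma
  assumes "2 \<le> q" "c < q ^ t" "b \<le> 1" "t + b \<le> n"
  shows wt_q_complement: "int (wt_q q n (b * q ^ t + (q ^ t - 1 - c)))
      = int t * (int q - 1) - int (\<Sum>i<t. qdigit q i c) + int b"
    and alt_digit_sum_complement: "alt_digit_sum q n (b * q ^ t + (q ^ t - 1 - c))
      = (if even t then 0 else 1 - int q) - (\<Sum>i<t. (-1) ^ Suc i * int (qdigit q i c))
        + int b * (-1) ^ Suc t"
proof -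
  define e where "e i = (if i < t then q - 1 - qdigit q i c else 1)" for i
  have e_int: "int (e i) = int q - 1 - int (qdigit q i c)" if "i < t" for i
    using that qdigit_less[of q i c] assms(1) by (simp add: e_def of_nat_diff)
  have q_pos: "0 < q" using assms(1) by simp
  have e_less: "\<forall>k<t + b. e k < q"
    using assms(1) by (auto simp: e_def)
  have "q ^ t - 1 - c = (\<Sum>k<t. e k * q ^ k)"
    using complement_qdigits[of q c t] assms(1,2) by (simp add: e_def)
  then have s_eq: "b * q ^ t + (q ^ t - 1 - c) = (\<Sum>k<t + b. e k * q ^ k)"
    using assms(3) by (cases b) (auto simp: e_def)
  have "int (wt_q q n (b * q ^ t + (q ^ t - 1 - c))) = (\<Sum>k<t + b. int (e k))"
    unfolding s_eq wt_q_sum_power[OF q_pos e_less assms(4)] by (simp add: of_nat_sum)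
  also have "\<dots> = (\<Sum>k<t. int (e k)) + int b"
    using assms(3) by (cases b) (auto simp: e_def)
  finally show "int (wt_q q n (b * q ^ t + (q ^ t - 1 - c)))
      = int t * (int q - 1) - int (\<Sum>i<t. qdigit q i c) + int b"
    by (simp add: e_int of_nat_sum sum_subtractf)
  have "alt_digit_sum q n (b * q ^ t + (q ^ t - 1 - c)) = (\<Sum>k<t + b. (-1) ^ Suc k * int (e k))"
    unfolding s_eq alt_digit_sum_sum_power[OF q_pos e_less assms(4)] ..
  also have "\<dots> = (\<Sum>k<t. (-1) ^ Suc k * int (e k)) + int b * (-1) ^ Suc t"
    using assms(3) by (cases b) (auto simp: e_def)
  also have "(\<Sum>k<t. (-1) ^ Suc k * int (e k))
      = (\<Sum>k<t. (int q - 1) * (-1) ^ Suc k - (-1) ^ Suc k * int (qdigit q k c))"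
    by (intro sum.cong refl) (simp add: e_int algebra_simps)
  also have "\<dots> = (int q - 1) * (\<Sum>k<t. (-1) ^ Suc k) - (\<Sum>k<t. (-1) ^ Suc k * int (qdigit q k c))"
    by (simp only: sum_subtractf sum_distrib_left)
  finally show "alt_digit_sum q n (b * q ^ t + (q ^ t - 1 - c))
      = (if even t then 0 else 1 - int q) - (\<Sum>i<t. (-1) ^ Suc i * int (qdigit q i c))
        + int b * (-1) ^ Suc t"
    using sum_alternating_sign[of t] by simp
qed

lemma power_mem_Z_rI:
  assumes "0 < q" "n = 2 * m" "0 < s" "s \<le> q ^ n - 1"
    and "int (wt_q q n s) \<le> int n * (int q - 1) - int r"
    and "int (wt_q q n s) = int n * (int q - 1) - int r \<Longrightarrow> nat \<bar>alt_digit_sum q n s\<bar> \<notin> I"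
  shows "\<alpha> ^ s \<in> Z_rI \<alpha> q n m r I"
proof (cases "int (wt_q q n s) = int n * (int q - 1) - int r")
  case False
  then have "\<alpha> ^ s \<in> Z_set \<alpha> q n r"
    unfolding Z_set_def using assms(3-5) by auto
  then show ?thesis unfolding Z_rI_def by blast
next
  case True
  define k where "k = nat \<bar>alt_digit_sum q n s\<bar>"
  have "k \<le> m * (q - 1)"
    using abs_alt_digit_sum_le[OF assms(1), of m s] assms(2) by (simp add: k_def nat_le_iff)
  moreover have "even k \<longleftrightarrow> even r"
  proof -
    have "even k \<longleftrightarrow> even (wt_q q n s)"
      using even_alternating_sum_iff[where t = n and d = "\<lambda>i. qdigit q i s"]
      unfolding k_def alt_digit_sum_def wt_q_def by (simp add: even_nat_iff)
    moreover have "int (wt_q q n s) + int r = 2 * (int m * (int q - 1))"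
      using True assms(2) by simp
    then have "even (wt_q q n s) \<longleftrightarrow> even r"
      by (metis dvd_triv_left even_add even_of_nat)
    ultimately show ?thesis by simp
  qed
  ultimately have "k \<in> M_set q m r - I"
    using assms(6)[OF True] by (simp add: M_set_def k_def)
  moreover have "\<alpha> ^ s \<in> Theta_set \<alpha> q n r k"
    unfolding Theta_set_def k_def O_q_minus_E_q using True assms(4) by auto
  ultimately show ?thesis unfolding Z_rI_def by blast
qed

lemma abs_alt_digit_sum_complement_mem:
  assumes "2 \<le> q" "c < q ^ t" "b \<le> 1" "t + b \<le> n" "(\<Sum>i<t. qdigit q i c) = b + 1"
  shows "nat \<bar>alt_digit_sum q n (b * q ^ t + (q ^ t - 1 - c))\<bar>
    \<in> (if even t then {1, 3} else {q, q - 2, nat \<bar>int q - 4\<bar>})"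
proof -
  define D where "D = (\<Sum>i<t. (-1) ^ Suc i * int (qdigit q i c))"
  have bounds: "\<bar>D\<bar> \<le> int b + 1" "even D \<longleftrightarrow> odd b"
    using abs_alternating_sum_le[of "\<lambda>i. qdigit q i c" t]
      even_alternating_sum_iff[of "\<lambda>i. qdigit q i c" t] assms(5)
    by (simp_all add: D_def)
  consider "b = 0" | "b = 1" using assms(3) by linarith
  then have "D \<in> (if b = 0 then {-1, 1} else {-2, 0, 2})"
    using bounds by cases (auto simp: abs_le_iff elim!: evenE oddE)
  moreover have "alt_digit_sum q n (b * q ^ t + (q ^ t - 1 - c))
      = (if even t then 0 else 1 - int q) - D + int b * (-1) ^ Suc t"
    unfolding D_def by (rule alt_digit_sum_complement[OF assms(1-4)])
  ultimately show ?thesis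
    using assms(1,3) by (cases b) (auto split: if_splits)
qed

section \<open>Syndromes and the error locator\<close>

lemma in_code_Lambda_eq_0:
  assumes "in_code \<alpha> q n m r I x" "1 \<le> s" "s \<le> q ^ n - 1" "\<alpha> ^ s \<in> Z_rI \<alpha> q n m r I"
  shows "Lambda x s = 0"
  using assms unfolding in_code_def Lambda_def by auto

lemma finite_field_power_card_minus_one:
  fixes g :: "'a::{finite,field}"
  assumes "g \<noteq> 0"
  shows "g ^ (card (UNIV :: 'a set) - 1) = 1"
proof -
  have "(\<Prod>y\<in>UNIV - {0}. g * y) = (\<Prod>y\<in>UNIV - {0::'a}. y)"
    by (rule prod.reindex_bij_witness[of _ "\<lambda>y. y / g" "\<lambda>y. g * y"]) (use assms in auto)
  moreover have "(\<Prod>y\<in>UNIV - {0}. g * y) = g ^ (card (UNIV :: 'a set) - 1) * (\<Prod>y\<in>UNIV - {0::'a}. y)"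
    by (simp add: prod.distrib card_Diff_singleton)
  moreover have "(\<Prod>y\<in>UNIV - {0::'a}. y) \<noteq> 0" by simp
  ultimately show ?thesis by simp
qed

lemma sum_word_support:
  fixes x :: "'a::{finite,semiring_0} \<Rightarrow> 'a"
  shows "(\<Sum>g\<in>UNIV - {0}. x g * f g) = (\<Sum>g\<in>{g. g \<noteq> 0 \<and> x g \<noteq> 0}. x g * f g)"
  by (rule sum.mono_neutral_right) auto

lemma Lambda_add_card_minus_one:
  fixes x :: "'a::{finite,field} \<Rightarrow> 'a"
  shows "Lambda x (card (UNIV :: 'a set) - 1 + s) = Lambda x s"
  unfolding Lambda_def
proof (intro sum.cong refl)
  fix g :: 'a
  assume "g \<in> UNIV - {0}"
  then have "g ^ (card (UNIV :: 'a set) - 1) = 1"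
    by (intro finite_field_power_card_minus_one) auto
  then show "x g * g ^ (card (UNIV :: 'a set) - 1 + s) = x g * g ^ s"
    by (simp add: power_add)
qed

lemma sum_word_poly:
  fixes x :: "'a::{finite,field} \<Rightarrow> 'a"
  assumes "degree P \<le> D"
  shows "(\<Sum>g\<in>UNIV - {0}. x g * poly P g) = (\<Sum>s\<le>D. coeff P s * Lambda x s)"
proof -
  have "poly P g = (\<Sum>s\<le>D. coeff P s * g ^ s)" for g
    unfolding poly_altdef using assms
    by (intro sum.mono_neutral_left) (auto simp: coeff_eq_0)
  then show ?thesis
    unfolding Lambda_def sum_distrib_left by (subst sum.swap) (simp add: sum_distrib_left mult_ac)
qed

lemma Lambda_hamming_wt_neq_0:
  fixes x :: "'a::{finite,field} \<Rightarrow> 'a"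
  assumes "hamming_wt x = d" "1 \<le> d" "\<forall>s\<in>{1..<d}. Lambda x s = 0"
  shows "Lambda x d \<noteq> 0"
proof
  assume Lambda_d: "Lambda x d = 0"
  define S where "S = {g. g \<noteq> 0 \<and> x g \<noteq> 0}"
  have card_S: "card S = d" using assms(1) by (simp add: S_def hamming_wt_def)
  then obtain g0 where g0: "g0 \<in> S" using assms(2) by fastforce
  (* P vanishes on the support except at g0 and has no constant term, so pairing it with x
     gives x g0 * poly P g0 \<noteq> 0 on the one hand and coeff P d * Lambda x d on the other. *)
  define P where "P = [:0, 1:] * (\<Prod>h\<in>S - {g0}. [:- h, 1:])"
  have "degree P = d"
    using g0 card_S assms(2)
    by (simp add: P_def degree_mult_eq degree_prod_eq_sum_degree card_Diff_singleton)
  then have "(\<Sum>g\<in>UNIV - {0}. x g * poly P g) = (\<Sum>s\<le>d. coeff P s * Lambda x s)"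
    by (intro sum_word_poly) simp
  also have "\<dots> = 0"
  proof (intro sum.neutral ballI)
    fix s assume "s \<in> {..d}"
    moreover have "coeff P 0 = 0" by (simp add: P_def)
    ultimately show "coeff P s * Lambda x s = 0"
      using Lambda_d assms(3) by (cases "s = 0"; cases "s = d") auto
  qed
  also have "(\<Sum>g\<in>UNIV - {0}. x g * poly P g) = (\<Sum>g\<in>{g0}. x g * poly P g)"
    unfolding sum_word_support S_def[symmetric]
    using g0 by (intro sum.mono_neutral_right) (auto simp: P_def poly_prod)
  finally show False
    using g0 by (simp add: S_def P_def poly_prod)
qed

lemma degree_locator:
  fixes x :: "'a::{finite,field} \<Rightarrow> 'a"
  shows "degree (locator x) = hamming_wt x"
  unfolding locator_def hamming_wt_def
  by (subst degree_prod_eq_sum_degree) auto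

lemma coeff_locator_0:
  fixes x :: "'a::{finite,field} \<Rightarrow> 'a"
  shows "coeff (locator x) 0 = 1"
  unfolding poly_0_coeff_0[symmetric] locator_def by (simp add: poly_prod)

lemma poly_locator_inverse:
  fixes x :: "'a::{finite,field} \<Rightarrow> 'a"
  assumes "g \<noteq> 0" "x g \<noteq> 0"
  shows "poly (locator x) (inverse g) = 0"
  unfolding locator_def poly_prod using assms
  by (subst prod_zero_iff) (auto intro!: bexI[of _ g])

lemma locator_Newton_identity:
  fixes x :: "'a::{finite,field} \<Rightarrow> 'a"
  assumes "hamming_wt x \<le> T"
  shows "(\<Sum>j\<le>hamming_wt x. coeff (locator x) j * Lambda x (T - j)) = 0"
proof -
  define S where "S = {g. g \<noteq> 0 \<and> x g \<noteq> 0}"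
  have power_eq: "g ^ (T - j) = g ^ T * inverse g ^ j" if "g \<noteq> 0" "j \<le> hamming_wt x" for g :: 'a and j
    using that assms by (simp add: power_diff power_inverse field_simps)
  have "(\<Sum>j\<le>hamming_wt x. coeff (locator x) j * Lambda x (T - j))
      = (\<Sum>g\<in>S. x g * g ^ T * (\<Sum>j\<le>hamming_wt x. coeff (locator x) j * inverse g ^ j))"
    unfolding Lambda_def sum_word_support S_def[symmetric] sum_distrib_left
    by (subst sum.swap) (auto simp: S_def power_eq mult_ac intro!: sum.cong)
  also have "\<dots> = (\<Sum>g\<in>S. x g * g ^ T * poly (locator x) (inverse g))"
    by (simp add: poly_altdef degree_locator)
  also have "\<dots> = 0"
    by (simp add: S_def poly_locator_inverse)
  finally show ?thesis .
qed

lemma locator_coeff_mult_Lambda: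
  fixes x :: "'a::{finite,field} \<Rightarrow> 'a" and J :: "nat set"
  assumes wt: "hamming_wt x = d"
    and below: "\<forall>s\<in>{1..<d}. Lambda x s = 0"
    and above: "\<forall>u\<in>{1..<d} - J. Lambda x (d + u) = 0"
    and sums: "\<forall>a\<in>J. \<forall>b\<in>J. d < a + b"
    and "1 \<le> u" "u \<le> d"
  shows "coeff (locator x) u * Lambda x d = - Lambda x (d + u)"
proof -
  have Lambda_d: "Lambda x d \<noteq> 0"
    using Lambda_hamming_wt_neq_0[OF wt _ below] assms(5,6) by simp
  from assms(5,6) show ?thesis
  proof (induction u rule: less_induct)
    case (less u)
    (* Only j = 0 and j = u survive in Newton's identity at T = d + u: for 0 < j < u either
       coeff j vanishes by induction, or u - j is a gap because elements of J sum to more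
       than d; for j > u the index d + u - j lies below d. *)
    define f where "f j = coeff (locator x) j * Lambda x (d + u - j)" for j
    have low: "f j = 0" if "1 \<le> j" "j < u" for j
    proof (cases "j \<in> J")
      case True
      then have "u - j \<notin> J" using sums that less.prems by force
      then have "u - j \<in> {1..<d} - J" using that less.prems by auto
      then have "Lambda x (d + (u - j)) = 0" using above by blast
      moreover have "d + (u - j) = d + u - j" using that by simp
      ultimately show ?thesis by (simp add: f_def)
    next
      case False
      then have "Lambda x (d + j) = 0" using above that less.prems by simp
      then have "coeff (locator x) j = 0"
        using less.IH[of j] that less.prems Lambda_d by simp
      then show ?thesis by (simp add: f_def)
    qed
    have high: "f j = 0" if "u < j" "j \<le> d" for j
    proof -
      have "d + u - j \<in> {1..<d}" using that less.prems by auto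
      then show ?thesis using below by (simp add: f_def)
    qed
    have "0 = (\<Sum>j\<le>d. f j)"
      unfolding f_def using locator_Newton_identity[of x "d + u"] wt by simp
    also have "\<dots> = (\<Sum>j\<in>{0, u}. f j)"
    proof (rule sum.mono_neutral_right)
      show "\<forall>j\<in>{..d} - {0, u}. f j = 0"
        using low high by (metis DiffE insertCI atMost_iff less_one linorder_neqE_nat not_less)
    qed (use less.prems in auto)
    also have "\<dots> = Lambda x (d + u) + coeff (locator x) u * Lambda x d"
      using less.prems by (simp add: f_def coeff_locator_0)
    finally show ?case by (simp add: add_eq_0_iff)
  qed
qed

lemma coeff_one_minus_sum_monom:
  fixes c :: "nat \<Rightarrow> 'a::comm_ring_1"
  assumes "finite J" "0 \<notin> J"
  shows "coeff (1 - (\<Sum>u\<in>J. smult (c u) (monom 1 u))) k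
    = (if k = 0 then 1 else if k \<in> J then - c k else 0)"
proof -
  have "coeff (\<Sum>u\<in>J. smult (c u) (monom 1 u)) k = (\<Sum>u\<in>J. if u = k then c u else 0)"
    by (auto simp: coeff_sum coeff_monom intro!: sum.cong)
  also have "\<dots> = (if k \<in> J then c k else 0)"
    using assms(1) by simp
  finally show ?thesis using assms(2) by auto
qed

lemma coeff_locator_of_Lambda_gaps:
  fixes x :: "'a::{finite,field} \<Rightarrow> 'a" and J :: "nat set"
  assumes wt: "hamming_wt x = d"
    and below: "\<forall>s\<in>{1..<d}. Lambda x s = 0"
    and above: "\<forall>u\<in>{1..<d} - J. Lambda x (d + u) = 0"
    and sums: "\<forall>a\<in>J. \<forall>b\<in>J. d < a + b"
    and J: "J \<subseteq> {1..d}" "d \<in> J"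
  shows "coeff (locator x) k
    = (if k = 0 then 1 else if k \<in> J then - (Lambda x (d + k) / Lambda x d) else 0)"
proof (cases "1 \<le> k \<and> k \<le> d")
  case True
  have "Lambda x d \<noteq> 0"
    using Lambda_hamming_wt_neq_0[OF wt _ below] J by auto
  moreover have "coeff (locator x) k * Lambda x d = - Lambda x (d + k)"
    using locator_coeff_mult_Lambda[OF wt below above sums] True by simp
  moreover have "k \<notin> J \<Longrightarrow> Lambda x (d + k) = 0"
    using above True J(2) by (cases "k = d") auto
  ultimately show ?thesis
    using True by (auto simp: field_simps)
next
  case False
  then show ?thesis
    using J wt by (auto simp: coeff_locator_0 coeff_eq_0 degree_locator)
qed

lemma locator_eq_of_Lambda_gaps:
  fixes x :: "'a::{finite,field} \<Rightarrow> 'a" and J :: "nat set"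
  assumes "hamming_wt x = d"
    and "\<forall>s\<in>{1..<d}. Lambda x s = 0"
    and "\<forall>u\<in>{1..<d} - J. Lambda x (d + u) = 0"
    and "\<forall>a\<in>J. \<forall>b\<in>J. d < a + b"
    and J: "J \<subseteq> {1..d}" "d \<in> J"
  shows "locator x = 1 - (\<Sum>u\<in>J. smult (Lambda x (d + u) / Lambda x d) (monom 1 u))"
proof (rule poly_eqI)
  fix k
  have "finite J" "0 \<notin> J" using J finite_subset by auto
  note coeff_rhs = coeff_one_minus_sum_monom[OF this]
  show "coeff (locator x) k
      = coeff (1 - (\<Sum>u\<in>J. smult (Lambda x (d + u) / Lambda x d) (monom 1 u))) k"
    unfolding coeff_rhs by (rule coeff_locator_of_Lambda_gaps[OF assms])
qed

section \<open>The vanishing syndromes of a minimum-weight codeword\<close>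

lemma I_set_subset:
  assumes "2 \<le> q"
  shows "I_set q t \<subseteq> {1..q ^ t - 1}"
proof
  fix u assume "u \<in> I_set q t"
  then obtain j where "j < t" "u = q ^ t - q ^ j" unfolding I_set_def by blast
  moreover have "q ^ j < q ^ t" using \<open>j < t\<close> assms by simp
  moreover have "1 \<le> q ^ j" using assms by simp
  ultimately show "u \<in> {1..q ^ t - 1}" by auto
qed

lemma top_mem_I_set: "1 \<le> t \<Longrightarrow> q ^ t - 1 \<in> I_set q t"
  unfolding I_set_def by (rule CollectI, rule exI[of _ 0]) simp

lemma I_set_add_gt:
  assumes "2 \<le> q" "a \<in> I_set q t" "b \<in> I_set q t"
  shows "q ^ t - 1 < a + b"
proof -
  obtain i j where ij: "i < t" "a = q ^ t - q ^ i" "j < t" "b = q ^ t - q ^ j"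
    using assms(2,3) unfolding I_set_def by blast
  then have "q ^ i \<le> q ^ (t - 1)" "q ^ j \<le> q ^ (t - 1)"
    using assms(1) by (simp_all add: power_increasing)
  moreover have "2 * q ^ (t - 1) \<le> q ^ t"
    using assms(1) ij(1) by (metis Suc_pred' gr0I less_zeroE mult_le_mono1 power_Suc)
  moreover have "1 \<le> q ^ (t - 1)" using assms(1) by simp
  ultimately show ?thesis using ij by linarith
qed

locale code_parameters =
  fixes q m n \<rho> r t :: nat and I :: "nat set"
  assumes q_ge_2: "2 \<le> q" and n_eq: "n = 2 * m" and rho_less: "\<rho> < n"
    and r_eq: "r = \<rho> * (q - 1) + 1" and t_eq: "t = n - \<rho>"
    and I_odd: "odd \<rho> \<Longrightarrow> {q, q - 2, nat \<bar>int q - 4\<bar>} \<inter> I = {}"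
    and I_even: "even \<rho> \<Longrightarrow> {1, 3} \<inter> I = {}"
begin

lemma power_mem_Z_rI_complement:
  assumes "b \<le> 1" "t + b \<le> n" "c < q ^ t" "b + 1 \<le> (\<Sum>i<t. qdigit q i c)"
    and "0 < b * q ^ t + (q ^ t - 1 - c)" "b * q ^ t + (q ^ t - 1 - c) \<le> q ^ n - 1"
  shows "\<alpha> ^ (b * q ^ t + (q ^ t - 1 - c)) \<in> Z_rI \<alpha> q n m r I"
proof (rule power_mem_Z_rI)
  have threshold: "int n * (int q - 1) - int r = int t * (int q - 1) - 1"
    using q_ge_2 rho_less by (simp add: r_eq t_eq of_nat_diff algebra_simps)
  note weight = wt_q_complement[OF q_ge_2 assms(3,1,2)]
  show "int (wt_q q n (b * q ^ t + (q ^ t - 1 - c))) \<le> int n * (int q - 1) - int r"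
    using assms(4) unfolding weight threshold by linarith
  assume "int (wt_q q n (b * q ^ t + (q ^ t - 1 - c))) = int n * (int q - 1) - int r"
  then have "(\<Sum>i<t. qdigit q i c) = b + 1"
    unfolding weight threshold by linarith
  moreover have "even t \<longleftrightarrow> even \<rho>"
    using rho_less by (simp add: t_eq n_eq even_diff_nat)
  ultimately show "nat \<bar>alt_digit_sum q n (b * q ^ t + (q ^ t - 1 - c))\<bar> \<notin> I"
    using abs_alt_digit_sum_complement_mem[OF q_ge_2 assms(3,1,2)] I_odd I_even
    by (cases "even \<rho>") auto
qed (use q_ge_2 n_eq assms(5,6) in auto)

lemma Lambda_eq_0_below:
  assumes "in_code \<alpha> q n m r I x" "1 \<le> s" "s < q ^ t - 1"
  shows "Lambda x s = 0"
proof (rule in_code_Lambda_eq_0[OF assms(1,2)])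
  define c where "c = q ^ t - 1 - s"
  have "q ^ t \<le> q ^ n" using q_ge_2 by (simp add: t_eq power_increasing)
  then show "s \<le> q ^ n - 1" using assms(3) by simp
  have c: "c < q ^ t" "c \<noteq> 0" using assms(3) by (auto simp: c_def)
  then have "(\<Sum>i<t. qdigit q i c) \<noteq> 0"
    using q_ge_2 by (subst sum_qdigits_eq_0_iff) auto
  then have "1 \<le> (\<Sum>i<t. qdigit q i c)" by linarith
  with c \<open>s \<le> q ^ n - 1\<close> assms(2,3)
  have "\<alpha> ^ (0 * q ^ t + (q ^ t - 1 - c)) \<in> Z_rI \<alpha> q n m r I"
    by (intro power_mem_Z_rI_complement) (auto simp: t_eq c_def)
  then show "\<alpha> ^ s \<in> Z_rI \<alpha> q n m r I"
    using assms(3) by (simp add: c_def)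
qed

lemma Lambda_eq_0_above:
  fixes x :: "'a::{finite,field} \<Rightarrow> 'a"
  assumes "in_code \<alpha> q n m r I x" "card (UNIV :: 'a set) = q ^ n"
    and "1 \<le> u" "u < q ^ t - 1" "u \<notin> I_set q t"
  shows "Lambda x (q ^ t - 1 + u) = 0"
proof (cases "\<rho> = 0")
  case True
  (* then q^t - 1 = q^n - 1 is a period of Lambda *)
  then show ?thesis
    using Lambda_add_card_minus_one[of x u] Lambda_eq_0_below[OF assms(1,3,4)] assms(2)
    by (simp add: t_eq)
next
  case False
  define c where "c = q ^ t - u"
  have c: "c < q ^ t" "c \<noteq> 0" using assms(3,4) by (auto simp: c_def)
  have "(\<Sum>i<t. qdigit q i c) \<noteq> 0"
    using q_ge_2 c by (subst sum_qdigits_eq_0_iff) auto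
  moreover have "(\<Sum>i<t. qdigit q i c) \<noteq> 1"
  proof
    assume "(\<Sum>i<t. qdigit q i c) = 1"
    then obtain j where "j < t" "c = q ^ j"
      using sum_qdigits_eq_1[of q c t] q_ge_2 c by auto
    then have "u \<in> I_set q t"
      using assms(4) unfolding I_set_def c_def by (auto intro!: exI[of _ j])
    with assms(5) show False by contradiction
  qed
  ultimately have weight: "1 + 1 \<le> (\<Sum>i<t. qdigit q i c)" by linarith
  have "Suc t \<le> n" using False rho_less by (simp add: t_eq)
  then have "q ^ Suc t \<le> q ^ n"
    using q_ge_2 by (intro power_increasing) auto
  moreover have "2 * q ^ t \<le> q ^ Suc t" using q_ge_2 by simp
  ultimately have bound: "1 * q ^ t + (q ^ t - 1 - c) \<le> q ^ n - 1"
    using assms(3,4) unfolding c_def by arith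
  have "\<alpha> ^ (1 * q ^ t + (q ^ t - 1 - c)) \<in> Z_rI \<alpha> q n m r I"
    using \<open>Suc t \<le> n\<close> q_ge_2 by (intro power_mem_Z_rI_complement[OF _ _ c(1) weight _ bound]) auto
  moreover have "1 * q ^ t + (q ^ t - 1 - c) = q ^ t - 1 + u"
    using assms(3,4) by (simp add: c_def)
  ultimately show ?thesis
    using assms(3) bound by (intro in_code_Lambda_eq_0[OF assms(1)]) auto
qed

end

theorem proposition5p1:
  fixes \<alpha> :: "'a::{finite,field}" and p l m n q N r \<rho> \<delta> :: nat
    and I :: "nat set" and x :: "'a \<Rightarrow> 'a"
  assumes "prime p" and "l \<ge> 1" and "q = p ^ l" and "m \<ge> 1" and "n = 2 * m"
    and "card (UNIV :: 'a set) = q ^ n" and "N = q ^ n - 1"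
    and "primitive_elem \<alpha>"
    and "\<rho> \<le> n - 1" and "r = \<rho> * (q - 1) + 1"
    and "I \<subseteq> M_set q m r"
    and "odd \<rho> \<Longrightarrow> {q, q - 2, nat \<bar>int q - 4\<bar>} \<inter> I = {}"
    and "even \<rho> \<Longrightarrow> {1, 3} \<inter> I = {}"
    and "\<delta> = q ^ (n - \<rho>) - 1"
    and "in_code \<alpha> q n m r I x"
    and "hamming_wt x = \<delta>"
  shows "(\<forall>s\<in>{1..<\<delta>}. Lambda x s = 0)
    \<and> (\<forall>u\<in>{1..<\<delta>}.
          (u \<notin> I_set q (n - \<rho>) \<longrightarrow> Lambda x (\<delta> + u) = 0 \<and> coeff (locator x) u = 0)
        \<and> (u \<in> I_set q (n - \<rho>) \<longrightarrow> Lambda x \<delta> \<noteq> 0 \<and>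
              coeff (locator x) u = - Lambda x (\<delta> + u) / Lambda x \<delta>))
    \<and> locator x = 1 - (\<Sum>u\<in>I_set q (n - \<rho>).
          smult (Lambda x (\<delta> + u) / Lambda x \<delta>) (monom 1 u))"
proof -
  have q_ge_2: "2 \<le> q"
    using prime_ge_2_nat[OF assms(1)] power_increasing[of 1 l p] assms(2,3) by simp
  interpret code_parameters q m n \<rho> r "n - \<rho>" I
    using assms q_ge_2 by unfold_locales auto
  define J where "J = I_set q (n - \<rho>)"
  have "1 \<le> n - \<rho>" using assms(4,5,9) by simp
  then have J: "J \<subseteq> {1..\<delta>}" "\<delta> \<in> J"
    using I_set_subset[OF q_ge_2] top_mem_I_set assms(14) by (auto simp: J_def)
  have below: "\<forall>s\<in>{1..<\<delta>}. Lambda x s = 0"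
    using Lambda_eq_0_below assms(14,15) by auto
  have above: "\<forall>u\<in>{1..<\<delta>} - J. Lambda x (\<delta> + u) = 0"
    using Lambda_eq_0_above assms(6,14,15) by (auto simp: J_def)
  have sums: "\<forall>a\<in>J. \<forall>b\<in>J. \<delta> < a + b"
    using I_set_add_gt[OF q_ge_2] assms(14) by (simp add: J_def)
  have "Lambda x \<delta> \<noteq> 0"
    using Lambda_hamming_wt_neq_0[OF assms(16) _ below] J by auto
  then have coeffs: "\<forall>u\<in>{1..<\<delta>}.
      (u \<notin> J \<longrightarrow> Lambda x (\<delta> + u) = 0 \<and> coeff (locator x) u = 0)
      \<and> (u \<in> J \<longrightarrow> Lambda x \<delta> \<noteq> 0 \<and> coeff (locator x) u = - Lambda x (\<delta> + u) / Lambda x \<delta>)"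
    using above coeff_locator_of_Lambda_gaps[OF assms(16) below above sums J] by auto
  show ?thesis
    unfolding J_def[symmetric]
    using below coeffs locator_eq_of_Lambda_gaps[OF assms(16) below above sums J] by blast
qed

end
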